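(* Let $n\ge3$, $K,H\le\mathbb{H}^\times$ finite with $[K,K]\le H\trianglelefteq K$, $H\ne\{1\}$ and $K/H$ cyclic. Let $\lambda=(\lambda_1,\dots,\lambda_k)$ be a partition of $n$, $\alpha,\beta\in K$, and $d=\gcd([K:H],\lambda_1,\dots,\lambda_k)$. Then $P_\lambda^\alpha$ and $P_\lambda^\beta$ are conjugate in $G_n(K,H)$ if and only if the order of $\alpha\beta^{-1}H$ in $K/H$ divides $[K:H]/d$.
   Context: $\mathbb{H}$: quaternions. $A_n(K,H)$: diagonal matrices $\mathrm{diag}(k_1,\dots,k_n)$, $k_i\in K$, $k_1\cdots k_n\in H$; $G_n(K,H)$: group generated by $A_n(K,H)$ and the permutation matrices $M(\sigma)$, acting on $\mathbb{H}^n$ by left multiplication. For a partition $\lambda=(\lambda_1,\dots,\lambda_k)$ of $n$ with partial sums $m_i=\lambda_1+\dots+\lambda_i$, $m_0=0$, let $I_i=\{m_{i-1}+1,\dots,m_i\}$; for $\alpha\in K$ let $D_\alpha=\mathrm{diag}(\alpha,1,\dots,1)$. Then $P_\lambda^\alpha=P_1\times\dots\times P_k$ with $P_i=\{D_\alpha M(\sigma)D_\alpha^{-1}:\sigma\in\mathrm{Sym}(I_i)\}$ (the symmetric groups permuting the vectors $\alpha e_1, e_2,\dots,e_{m_1}$, resp. $e_{m_{i-1}+1},\dots,e_{m_i}$). *)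

theory Defs
  imports "HOL-Algebra.Algebra" "HOL-Combinatorics.Permutations"
begin

datatype quat = Quat (qre: real) (qi: real) (qj: real) (qk: real)

instantiation quat :: ring_1
begin

definition "0 = Quat 0 0 0 0"
definition "1 = Quat 1 0 0 0"
definition "x + y = Quat (qre x + qre y) (qi x + qi y) (qj x + qj y) (qk x + qk y)"
definition "- x = Quat (- qre x) (- qi x) (- qj x) (- qk x)"
definition "x - y = Quat (qre x - qre y) (qi x - qi y) (qj x - qj y) (qk x - qk y)"
definition "x * y = Quat
   (qre x * qre y - qi x * qi y - qj x * qj y - qk x * qk y)
   (qre x * qi y + qi x * qre y + qj x * qk y - qk x * qj y)
   (qre x * qj y - qi x * qk y + qj x * qre y + qk x * qi y)
   (qre x * qk y + qi x * qj y - qj x * qi y + qk x * qre y)"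

instance
  by standard
     (simp_all add: zero_quat_def one_quat_def plus_quat_def uminus_quat_def
        minus_quat_def times_quat_def quat.expand algebra_simps)

end

definition quat_units :: "quat monoid" where
  "quat_units = \<lparr>carrier = UNIV - {0}, monoid.mult = (*), one = 1\<rparr>"

section \<open>Quaternionic n x n matrices (indices 0..n-1), acting on H^n from the left\<close>

type_synonym qmat = "nat \<Rightarrow> nat \<Rightarrow> quat"

definition qmat_mult :: "nat \<Rightarrow> qmat \<Rightarrow> qmat \<Rightarrow> qmat" where
  "qmat_mult n A B = (\<lambda>i j. if i < n \<and> j < n then (\<Sum>l<n. A i l * B l j) else 0)"

definition qmat_one :: "nat \<Rightarrow> qmat" where
  "qmat_one n = (\<lambda>i j. if i < n \<and> j < n \<and> i = j then 1 else 0)"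

definition qmat_monoid :: "nat \<Rightarrow> qmat monoid" where
  "qmat_monoid n = \<lparr>carrier = {A. \<forall>i j. (n \<le> i \<or> n \<le> j) \<longrightarrow> A i j = 0},
                    monoid.mult = qmat_mult n, one = qmat_one n\<rparr>"

definition qdiag :: "nat \<Rightarrow> (nat \<Rightarrow> quat) \<Rightarrow> qmat" where
  "qdiag n k = (\<lambda>i j. if i < n \<and> j < n \<and> i = j then k i else 0)"

definition perm_mat :: "nat \<Rightarrow> (nat \<Rightarrow> nat) \<Rightarrow> qmat" where
  "perm_mat n \<sigma> = (\<lambda>i j. if i < n \<and> j < n \<and> i = \<sigma> j then 1 else 0)"

definition A_n :: "nat \<Rightarrow> quat set \<Rightarrow> quat set \<Rightarrow> qmat set" where
  "A_n n K H = {qdiag n k | k. (\<forall>i<n. k i \<in> K) \<and> foldr (*) (map k [0..<n]) 1 \<in> H}"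

definition G_n :: "nat \<Rightarrow> quat set \<Rightarrow> quat set \<Rightarrow> qmat set" where
  "G_n n K H = generate (qmat_monoid n)
      (A_n n K H \<union> {perm_mat n \<sigma> | \<sigma>. \<sigma> permutes {0..<n}})"

text \<open>Partial sums \<open>m_i = \<lambda>_1 + ... + \<lambda>_i\<close>; block \<open>I_i\<close> (i = 1..k) in 0-based indexing
  is \<open>{m_{i-1} ..< m_i}\<close>.\<close>
definition psum :: "nat list \<Rightarrow> nat \<Rightarrow> nat" where
  "psum lam i = sum_list (take i lam)"

definition block :: "nat list \<Rightarrow> nat \<Rightarrow> nat set" where
  "block lam i = {psum lam (i - 1) ..< psum lam i}"

definition D_mat :: "nat \<Rightarrow> quat \<Rightarrow> qmat" where
  "D_mat n \<alpha> = qdiag n (\<lambda>i. if i = 0 then \<alpha> else 1)"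

definition P_block :: "nat \<Rightarrow> nat list \<Rightarrow> quat \<Rightarrow> nat \<Rightarrow> qmat set" where
  "P_block n lam \<alpha> i = {qmat_mult n (qmat_mult n (D_mat n \<alpha>) (perm_mat n \<sigma>))
                            (D_mat n (inv\<^bsub>quat_units\<^esub> \<alpha>)) | \<sigma>. \<sigma> permutes block lam i}"

fun set_prod_list :: "nat \<Rightarrow> qmat set list \<Rightarrow> qmat set" where
  "set_prod_list n [] = {qmat_one n}"
| "set_prod_list n (S # Ss) = {qmat_mult n A B | A B. A \<in> S \<and> B \<in> set_prod_list n Ss}"

definition P_lam :: "nat \<Rightarrow> nat list \<Rightarrow> quat \<Rightarrow> qmat set" where
  "P_lam n lam \<alpha> = set_prod_list n (map (P_block n lam \<alpha>) [1..<Suc (length lam)])"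

definition is_partition :: "nat list \<Rightarrow> nat \<Rightarrow> bool" where
  "is_partition lam n \<longleftrightarrow> (\<forall>x\<in>set lam. 0 < x) \<and> sorted (rev lam) \<and> sum_list lam = n"

definition conj_in :: "nat \<Rightarrow> qmat set \<Rightarrow> qmat set \<Rightarrow> qmat set \<Rightarrow> bool" where
  "conj_in n G P Q \<longleftrightarrow> (\<exists>g\<in>G. (\<lambda>A. qmat_mult n (qmat_mult n g A) (inv\<^bsub>qmat_monoid n\<^esub> g)) ` P = Q)"

end

(*
  Every matrix in G_n(K,H) is monomial, M(tau) diag(e), with entries in K whose product has trivial
  image in the abelian group K/H.  Write P^alpha = D_alpha Y D_alpha^-1, where Y = P^1 is the Young
  subgroup of permutation matrices preserving the blocks of lambda.  Then g conjugates P^alpha onto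
  P^beta iff h = D_beta^-1 g D_alpha normalises Y.  A monomial h = M(tau) diag(f) normalising Y has
  f constant on every block, because h must conjugate each transposition inside a block to a
  permutation matrix; conversely a diagonal matrix constant on the blocks centralises Y.  So the
  two subgroups are conjugate iff alpha beta^-1 H is a product of lambda_i-th powers in K/H.  In a
  cyclic group of order m these products are exactly the elements x with x^(m/d) = 1, where
  d = gcd(m, lambda_1, ..., lambda_k), by Bezout's identity for d.
*)
theory Submission
  imports Defs
begin

definition quat_norm_sq :: "quat \<Rightarrow> real" where
  "quat_norm_sq q = qre q ^ 2 + qi q ^ 2 + qj q ^ 2 + qk q ^ 2"

lemma quat_norm_sq_eq_0_iff: "quat_norm_sq q = 0 \<longleftrightarrow> q = 0"
  by (cases q) (auto simp: quat_norm_sq_def zero_quat_def add_nonneg_eq_0_iff)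

instantiation quat :: division_ring
begin

definition "inverse (q :: quat) = Quat (qre q / quat_norm_sq q) (- qi q / quat_norm_sq q)
   (- qj q / quat_norm_sq q) (- qk q / quat_norm_sq q)"

definition "x div y = x * inverse y" for x y :: quat

instance
proof
  fix q :: quat
  assume "q \<noteq> 0"
  then have "quat_norm_sq q \<noteq> 0" by (simp add: quat_norm_sq_eq_0_iff)
  then show "inverse q * q = 1" "q * inverse q = 1"
    by (simp_all add: times_quat_def inverse_quat_def one_quat_def quat.expand field_simps,
        simp_all add: quat_norm_sq_def power2_eq_square algebra_simps)
qed (simp_all add: divide_quat_def inverse_quat_def zero_quat_def)

end

lemma group_quat_units: "group quat_units"
  by (rule groupI) (auto simp: quat_units_def mult.assoc,
      metis DiffI UNIV_I left_inverse inverse_nonzero_iff_nonzero singletonD)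

lemma inv_quat_units [simp]: "q \<noteq> 0 \<Longrightarrow> inv\<^bsub>quat_units\<^esub> q = inverse q"
  by (rule monoid.inv_unique'[OF group.is_monoid[OF group_quat_units], symmetric])
     (auto simp: quat_units_def)

section \<open>Monomial matrices and conjugation\<close>

lemma (in monoid) inv_mult_Units:
  assumes "x \<in> Units G" "y \<in> Units G"
  shows "inv (x \<otimes> y) = inv y \<otimes> inv x"
  using assms by (intro inv_unique'[symmetric]) (simp_all add: Units_closed m_assoc[symmetric],
      simp_all add: Units_closed m_assoc)

lemma (in monoid) conj_conj_Units:
  assumes "g \<in> Units G" "h \<in> Units G" "x \<in> carrier G"
  shows "g \<otimes> (h \<otimes> x \<otimes> inv h) \<otimes> inv g = (g \<otimes> h) \<otimes> x \<otimes> inv (g \<otimes> h)"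
  using assms by (simp add: inv_mult_Units Units_closed m_assoc)

lemma (in monoid) conj_mult_Units:
  assumes "g \<in> Units G" "x \<in> carrier G" "y \<in> carrier G"
  shows "g \<otimes> (x \<otimes> y) \<otimes> inv g = (g \<otimes> x \<otimes> inv g) \<otimes> (g \<otimes> y \<otimes> inv g)"
proof -
  have "g \<otimes> (x \<otimes> y) \<otimes> inv g = g \<otimes> x \<otimes> (inv g \<otimes> g) \<otimes> y \<otimes> inv g"
    using assms by (simp add: Units_closed m_assoc)
  also have "\<dots> = (g \<otimes> x \<otimes> inv g) \<otimes> (g \<otimes> y \<otimes> inv g)"
    using assms by (simp only: m_assoc Units_closed Units_inv_closed m_closed)
  finally show ?thesis .
qed

lemma qmat_monoid_simps [simp]:
  "x \<otimes>\<^bsub>qmat_monoid n\<^esub> y = qmat_mult n x y"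
  "\<one>\<^bsub>qmat_monoid n\<^esub> = qmat_one n"
  by (simp_all add: qmat_monoid_def)

lemma qmat_mult_carrier [simp]: "qmat_mult n A B \<in> carrier (qmat_monoid n)"
  by (simp add: qmat_monoid_def qmat_mult_def)

lemma qmat_one_carrier [simp]: "qmat_one n \<in> carrier (qmat_monoid n)"
  by (simp add: qmat_monoid_def qmat_one_def)

lemma qmat_mult_assoc: "qmat_mult n (qmat_mult n A B) C = qmat_mult n A (qmat_mult n B C)"
proof (intro ext)
  fix i j
  show "qmat_mult n (qmat_mult n A B) C i j = qmat_mult n A (qmat_mult n B C) i j"
  proof (cases "i < n \<and> j < n")
    case True
    have "(\<Sum>l<n. qmat_mult n A B i l * C l j) = (\<Sum>l<n. \<Sum>m<n. A i m * B m l * C l j)"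
      using True by (intro sum.cong) (auto simp: qmat_mult_def sum_distrib_right)
    also have "\<dots> = (\<Sum>m<n. \<Sum>l<n. A i m * (B m l * C l j))"
      by (subst sum.swap) (simp add: mult.assoc)
    also have "\<dots> = (\<Sum>m<n. A i m * qmat_mult n B C m j)"
      using True by (intro sum.cong) (auto simp: qmat_mult_def sum_distrib_left)
    finally show ?thesis using True by (simp add: qmat_mult_def)
  qed (auto simp: qmat_mult_def)
qed

lemma qmat_one_mult: "A \<in> carrier (qmat_monoid n) \<Longrightarrow> qmat_mult n (qmat_one n) A = A"
proof (intro ext)
  fix i j assume A: "A \<in> carrier (qmat_monoid n)"
  have "(\<Sum>l<n. qmat_one n i l * A l j) = (\<Sum>l<n. if l = i then A i j else 0)" if "i < n"
    using that by (intro sum.cong) (auto simp: qmat_one_def)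
  then show "qmat_mult n (qmat_one n) A i j = A i j"
    using A by (auto simp: qmat_mult_def qmat_monoid_def)
qed

lemma qmat_mult_one: "A \<in> carrier (qmat_monoid n) \<Longrightarrow> qmat_mult n A (qmat_one n) = A"
proof (intro ext)
  fix i j assume A: "A \<in> carrier (qmat_monoid n)"
  have "(\<Sum>l<n. A i l * qmat_one n l j) = (\<Sum>l<n. if l = j then A i j else 0)" if "j < n"
    using that by (intro sum.cong) (auto simp: qmat_one_def)
  then show "qmat_mult n A (qmat_one n) i j = A i j"
    using A by (auto simp: qmat_mult_def qmat_monoid_def)
qed

lemma monoid_qmat_monoid: "monoid (qmat_monoid n)"
  by (rule monoidI) (simp_all add: qmat_mult_assoc qmat_one_mult qmat_mult_one)

lemma qmat_mult_Units:
  "g \<in> Units (qmat_monoid n) \<Longrightarrow> h \<in> Units (qmat_monoid n) \<Longrightarrow> qmat_mult n g h \<in> Units (qmat_monoid n)"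
  using monoid.Units_m_closed[OF monoid_qmat_monoid] by simp

definition mon_mat :: "nat \<Rightarrow> (nat \<Rightarrow> nat) \<Rightarrow> (nat \<Rightarrow> quat) \<Rightarrow> qmat" where
  "mon_mat n \<sigma> e = (\<lambda>i j. if i < n \<and> j < n \<and> i = \<sigma> j then e j else 0)"

lemma mon_mat_carrier [simp]: "mon_mat n \<sigma> e \<in> carrier (qmat_monoid n)"
  by (simp add: qmat_monoid_def mon_mat_def)

lemma mon_mat_cong: "(\<And>j. j < n \<Longrightarrow> e j = e' j) \<Longrightarrow> mon_mat n \<sigma> e = mon_mat n \<sigma> e'"
  by (auto simp: mon_mat_def fun_eq_iff)

lemma qdiag_eq_mon_mat: "qdiag n k = mon_mat n id k"
  by (auto simp: qdiag_def mon_mat_def fun_eq_iff)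

lemma perm_mat_eq_mon_mat: "perm_mat n \<sigma> = mon_mat n \<sigma> (\<lambda>_. 1)"
  by (auto simp: perm_mat_def mon_mat_def fun_eq_iff)

lemma qmat_one_eq_mon_mat: "qmat_one n = mon_mat n id (\<lambda>_. 1)"
  by (auto simp: qmat_one_def mon_mat_def fun_eq_iff)

lemma mon_mat_mult:
  assumes "\<sigma> permutes {..<n}"
  shows "qmat_mult n (mon_mat n \<tau> e) (mon_mat n \<sigma> f) = mon_mat n (\<tau> \<circ> \<sigma>) (\<lambda>j. e (\<sigma> j) * f j)"
proof (intro ext)
  fix i j
  show "qmat_mult n (mon_mat n \<tau> e) (mon_mat n \<sigma> f) i j = mon_mat n (\<tau> \<circ> \<sigma>) (\<lambda>j. e (\<sigma> j) * f j) i j"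
  proof (cases "i < n \<and> j < n")
    case True
    then have "\<sigma> j < n" using permutes_in_image[OF assms] by auto
    have "(\<Sum>l<n. mon_mat n \<tau> e i l * mon_mat n \<sigma> f l j)
        = (\<Sum>l<n. if l = \<sigma> j then mon_mat n \<tau> e i (\<sigma> j) * f j else 0)"
      using True by (intro sum.cong) (auto simp: mon_mat_def)
    then show ?thesis
      using True \<open>\<sigma> j < n\<close> by (simp add: qmat_mult_def mon_mat_def)
  qed (auto simp: qmat_mult_def mon_mat_def)
qed

lemma mon_mat_eq_imp_entry_eq:
  assumes "mon_mat n \<rho> u = mon_mat n \<sigma> v" "j < n" "\<sigma> j < n" "v j \<noteq> 0"
  shows "u j = v j"
  using fun_cong[OF fun_cong[OF assms(1), of "\<sigma> j"], of j] assms(2-4)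
  by (auto simp: mon_mat_def split: if_splits)

lemma mon_mat_Units:
  assumes "\<tau> permutes {..<n}" "\<And>j. j < n \<Longrightarrow> e j \<noteq> 0"
  shows "mon_mat n \<tau> e \<in> Units (qmat_monoid n)"
    and "inv\<^bsub>qmat_monoid n\<^esub> (mon_mat n \<tau> e)
           = mon_mat n (inv_into UNIV \<tau>) (\<lambda>j. inverse (e (inv_into UNIV \<tau> j)))"
proof -
  interpret monoid "qmat_monoid n" by (rule monoid_qmat_monoid)
  let ?M = "mon_mat n \<tau> e"
    and ?M' = "mon_mat n (inv_into UNIV \<tau>) (\<lambda>j. inverse (e (inv_into UNIV \<tau> j)))"
  have inv_\<tau>: "inv_into UNIV \<tau> permutes {..<n}" using permutes_inv[OF assms(1)] .
  have "qmat_mult n ?M ?M' = mon_mat n id (\<lambda>_. 1)"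
    unfolding mon_mat_mult[OF inv_\<tau>] permutes_inv_o[OF assms(1)]
    using assms(2) permutes_in_image[OF inv_\<tau>] by (intro mon_mat_cong) simp
  moreover have "qmat_mult n ?M' ?M = mon_mat n id (\<lambda>_. 1)"
    unfolding mon_mat_mult[OF assms(1)] permutes_inv_o[OF assms(1)]
    using assms(2) permutes_inverses[OF assms(1)] by (intro mon_mat_cong) simp
  ultimately have "?M' \<otimes>\<^bsub>qmat_monoid n\<^esub> ?M = \<one>\<^bsub>qmat_monoid n\<^esub>"
    "?M \<otimes>\<^bsub>qmat_monoid n\<^esub> ?M' = \<one>\<^bsub>qmat_monoid n\<^esub>"
    by (simp_all add: qmat_one_eq_mon_mat)
  then show "?M \<in> Units (qmat_monoid n)" "inv\<^bsub>qmat_monoid n\<^esub> ?M = ?M'"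
    by (auto simp: Units_def intro!: inv_unique'[symmetric])
qed

definition qmat_conj :: "nat \<Rightarrow> qmat \<Rightarrow> qmat \<Rightarrow> qmat" where
  "qmat_conj n g A = qmat_mult n (qmat_mult n g A) (inv\<^bsub>qmat_monoid n\<^esub> g)"

lemma conj_in_iff: "conj_in n G P Q \<longleftrightarrow> (\<exists>g\<in>G. qmat_conj n g ` P = Q)"
  by (simp add: conj_in_def qmat_conj_def[abs_def])

lemma qmat_conj_carrier [simp]: "qmat_conj n g A \<in> carrier (qmat_monoid n)"
  by (simp add: qmat_conj_def)

lemma qmat_conj_one: "A \<in> carrier (qmat_monoid n) \<Longrightarrow> qmat_conj n (qmat_one n) A = A"
  using monoid.inv_one[OF monoid_qmat_monoid, of n]
  by (simp add: qmat_conj_def qmat_one_mult qmat_mult_one)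

lemma qmat_conj_conj:
  assumes "g \<in> Units (qmat_monoid n)" "h \<in> Units (qmat_monoid n)" "A \<in> carrier (qmat_monoid n)"
  shows "qmat_conj n g (qmat_conj n h A) = qmat_conj n (qmat_mult n g h) A"
  using monoid.conj_conj_Units[OF monoid_qmat_monoid assms] by (simp add: qmat_conj_def)

lemma qmat_conj_mult:
  assumes "g \<in> Units (qmat_monoid n)" "A \<in> carrier (qmat_monoid n)" "B \<in> carrier (qmat_monoid n)"
  shows "qmat_conj n g (qmat_mult n A B) = qmat_mult n (qmat_conj n g A) (qmat_conj n g B)"
  using monoid.conj_mult_Units[OF monoid_qmat_monoid assms] by (simp add: qmat_conj_def)

lemma qmat_conj_one_right:
  "g \<in> Units (qmat_monoid n) \<Longrightarrow> qmat_conj n g (qmat_one n) = qmat_one n"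
  using monoid.Units_r_inv[OF monoid_qmat_monoid] monoid.Units_closed[OF monoid_qmat_monoid]
  by (simp add: qmat_conj_def qmat_mult_one)

lemma image_qmat_conj_conj:
  assumes "g \<in> Units (qmat_monoid n)" "h \<in> Units (qmat_monoid n)" "S \<subseteq> carrier (qmat_monoid n)"
  shows "qmat_conj n g ` qmat_conj n h ` S = qmat_conj n (qmat_mult n g h) ` S"
  using qmat_conj_conj[OF assms(1,2)] assms(3) by (force simp: image_image)

lemma image_qmat_conj_inv:
  assumes "g \<in> Units (qmat_monoid n)" "S \<subseteq> carrier (qmat_monoid n)"
  shows "qmat_conj n (inv\<^bsub>qmat_monoid n\<^esub> g) ` qmat_conj n g ` S = S"
proof -
  interpret monoid "qmat_monoid n" by (rule monoid_qmat_monoid)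
  have "qmat_mult n (inv\<^bsub>qmat_monoid n\<^esub> g) g = qmat_one n"
    using Units_l_inv[OF assms(1)] by simp
  then show ?thesis
    using assms image_qmat_conj_conj[of "inv\<^bsub>qmat_monoid n\<^esub> g" n g S]
    by (simp add: qmat_conj_one subset_iff)
qed

lemma qmat_conj_mon_mat:
  assumes "\<tau> permutes {..<n}" "\<sigma> permutes {..<n}" "\<And>j. j < n \<Longrightarrow> e j \<noteq> 0"
  shows "qmat_conj n (mon_mat n \<tau> e) (mon_mat n \<sigma> f) = mon_mat n (\<tau> \<circ> \<sigma> \<circ> inv_into UNIV \<tau>)
           (\<lambda>j. e (\<sigma> (inv_into UNIV \<tau> j)) * f (inv_into UNIV \<tau> j)
                * inverse (e (inv_into UNIV \<tau> j)))"
  using assms permutes_inv[OF assms(1)]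
  by (simp add: qmat_conj_def mon_mat_Units mon_mat_mult)

lemma set_prod_list_carrier: "set_prod_list n Ss \<subseteq> carrier (qmat_monoid n)"
  by (cases Ss) auto

lemma set_prod_list_subset:
  assumes "qmat_one n \<in> M" "\<And>A B. A \<in> M \<Longrightarrow> B \<in> M \<Longrightarrow> qmat_mult n A B \<in> M"
    and "\<forall>S\<in>set Ss. S \<subseteq> M"
  shows "set_prod_list n Ss \<subseteq> M"
  using assms(3) by (induction Ss) (auto simp: assms(1,2) subset_iff)

lemma qmat_one_mem_set_prod_list:
  "\<forall>S\<in>set Ss. qmat_one n \<in> S \<Longrightarrow> qmat_one n \<in> set_prod_list n Ss"
  by (induction Ss) (auto, metis qmat_one_carrier qmat_one_mult)

lemma mem_set_prod_list:
  assumes "\<forall>S\<in>set Ss. qmat_one n \<in> S" "S \<in> set Ss" "A \<in> S" "A \<in> carrier (qmat_monoid n)"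
  shows "A \<in> set_prod_list n Ss"
  using assms(1,2)
proof (induction Ss)
  case (Cons S' Ss)
  show ?case
  proof (cases "S = S'")
    case True
    have "qmat_mult n A (qmat_one n) \<in> set_prod_list n (S' # Ss)"
      using True assms(3) qmat_one_mem_set_prod_list Cons.prems(1) by auto
    then show ?thesis using assms(4) by (simp add: qmat_mult_one)
  next
    case False
    then have "qmat_mult n (qmat_one n) A \<in> set_prod_list n (S' # Ss)"
      using Cons by auto
    then show ?thesis using assms(4) by (simp add: qmat_one_mult)
  qed
qed simp

lemma image_qmat_conj_set_prod_list:
  assumes "g \<in> Units (qmat_monoid n)" "\<forall>S\<in>set Ss. S \<subseteq> carrier (qmat_monoid n)"
  shows "qmat_conj n g ` set_prod_list n Ss = set_prod_list n (map ((`) (qmat_conj n g)) Ss)"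
  using assms(2)
proof (induction Ss)
  case Nil
  then show ?case using qmat_conj_one_right[OF assms(1)] by simp
next
  case (Cons S Ss)
  have "qmat_conj n g (qmat_mult n A B) = qmat_mult n (qmat_conj n g A) (qmat_conj n g B)"
    if "A \<in> S" "B \<in> set_prod_list n Ss" for A B
    using that Cons.prems set_prod_list_carrier[of n Ss]
    by (auto intro: qmat_conj_mult[OF assms(1)])
  then have "qmat_conj n g ` set_prod_list n (S # Ss)
      = {qmat_mult n (qmat_conj n g A) (qmat_conj n g B) | A B. A \<in> S \<and> B \<in> set_prod_list n Ss}"
    by (auto simp: image_iff) metis
  also have "\<dots> = {qmat_mult n A' B' | A' B'.
      A' \<in> qmat_conj n g ` S \<and> B' \<in> qmat_conj n g ` set_prod_list n Ss}"
    by blast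
  also have "\<dots> = set_prod_list n (map ((`) (qmat_conj n g)) (S # Ss))"
    using Cons by simp
  finally show ?case .
qed

section \<open>Blocks of a partition\<close>

lemma psum_Suc: "i < length lam \<Longrightarrow> psum lam (Suc i) = psum lam i + lam ! i"
  by (simp add: psum_def take_Suc_conv_app_nth)

lemma psum_mono: "i \<le> i' \<Longrightarrow> psum lam i \<le> psum lam i'"
  by (metis le_add1 le_add_diff_inverse psum_def sum_list_append take_add)

lemma psum_length: "psum lam (length lam) = sum_list lam"
  by (simp add: psum_def)

lemma psum_less_Suc: "0 \<notin> set lam \<Longrightarrow> i < length lam \<Longrightarrow> psum lam i < psum lam (Suc i)"
  by (metis add_less_cancel_left gr0I nth_mem psum_Suc add_0_right)

lemma psum_less_sum_list: "0 \<notin> set lam \<Longrightarrow> i < length lam \<Longrightarrow> psum lam i < sum_list lam"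
  using psum_less_Suc psum_mono[of "Suc i" "length lam" lam] by (fastforce simp: psum_length)

lemma block_Suc: "block lam (Suc i) = {psum lam i..<psum lam (Suc i)}"
  by (simp add: block_def)

lemma block_subset: "i \<le> length lam \<Longrightarrow> block lam i \<subseteq> {..<sum_list lam}"
  using psum_mono[of i "length lam" lam] by (auto simp: block_def psum_length)

lemma permutes_block:
  "sum_list lam = n \<Longrightarrow> i \<le> length lam \<Longrightarrow> \<sigma> permutes block lam i \<Longrightarrow> \<sigma> permutes {..<n}"
  using block_subset permutes_subset by blast

definition constant_on_blocks :: "nat list \<Rightarrow> (nat \<Rightarrow> 'a) \<Rightarrow> bool" where
  "constant_on_blocks lam f \<longleftrightarrow>
     (\<forall>i\<in>{1..length lam}. \<forall>a\<in>block lam i. \<forall>b\<in>block lam i. f a = f b)"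

lemma constant_on_blocks_permutes:
  assumes "constant_on_blocks lam f" "1 \<le> i" "i \<le> length lam" "\<sigma> permutes block lam i"
  shows "f (\<sigma> j) = f j"
proof (cases "j \<in> block lam i")
  case True
  then have "\<sigma> j \<in> block lam i" using permutes_in_image[OF assms(4)] by simp
  with True assms(1-3) show ?thesis unfolding constant_on_blocks_def by (meson atLeastAtMost_iff)
next
  case False
  then show ?thesis using permutes_not_in[OF assms(4)] by simp
qed

lemma constant_on_blocks_comp: "constant_on_blocks lam f \<Longrightarrow> constant_on_blocks lam (\<lambda>j. g (f j))"
  unfolding constant_on_blocks_def by (intro ballI arg_cong[where f=g]) blast

lemma (in comm_monoid) finprod_block:
  assumes "0 \<notin> set lam" "k < length lam" "constant_on_blocks lam y" "y (psum lam k) \<in> carrier G"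
  shows "finprod G y (block lam (Suc k)) = y (psum lam k) [^] (lam ! k)"
proof -
  have "psum lam k \<in> block lam (Suc k)" "Suc k \<in> {1..length lam}"
    using psum_less_Suc[OF assms(1,2)] assms(2) by (simp_all add: block_Suc)
  then have "finprod G y (block lam (Suc k)) = finprod G (\<lambda>_. y (psum lam k)) (block lam (Suc k))"
    using assms(3,4) unfolding constant_on_blocks_def by (intro finprod_cong') blast+
  then show ?thesis
    using assms(2,4) by (simp add: finprod_const block_Suc psum_Suc)
qed

lemma (in comm_monoid) finprod_constant_on_blocks:
  assumes "sum_list lam = n" "0 \<notin> set lam" "y \<in> {..<n} \<rightarrow> carrier G"
    and "constant_on_blocks lam y"
  shows "finprod G y {..<n} = (\<Otimes>i\<in>{..<length lam}. y (psum lam i) [^] (lam ! i))"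
proof -
  have y_psum: "y (psum lam i) \<in> carrier G" if "i < length lam" for i
    using psum_less_sum_list[OF assms(2) that] assms(1,3) by auto
  have "finprod G y {..<psum lam k} = (\<Otimes>i\<in>{..<k}. y (psum lam i) [^] (lam ! i))"
    if "k \<le> length lam" for k
    using that
  proof (induction k)
    case (Suc k)
    then have k: "k < length lam" by simp
    have "y \<in> {..<psum lam (Suc k)} \<rightarrow> carrier G"
      using assms(1,3) psum_mono[OF Suc.prems, of lam] by (auto simp: psum_length)
    moreover have "{..<psum lam (Suc k)} = {..<psum lam k} \<union> block lam (Suc k)"
      using psum_mono[of k "Suc k" lam] by (auto simp: block_Suc)
    ultimately have "finprod G y {..<psum lam (Suc k)}
        = finprod G y {..<psum lam k} \<otimes> finprod G y (block lam (Suc k))"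
      by (simp only:) (intro finprod_Un_disjoint, auto simp: block_Suc)
    then show ?case
      using Suc k y_psum finprod_block[OF assms(2) k assms(4) y_psum[OF k]]
      by (simp add: lessThan_Suc m_comm Pi_def)
  qed (simp add: psum_def)
  from this[of "length lam"] show ?thesis using assms(1) by (simp add: psum_length)
qed

lemma ex_constant_on_blocks:
  assumes "0 \<notin> set lam"
  obtains f where "constant_on_blocks lam f" "\<And>i. i < length lam \<Longrightarrow> f (psum lam i) = c i"
    and "\<And>j. f j \<in> range c"
proof -
  \<comment> \<open>\<open>idx j\<close> counts the blocks lying below \<open>j\<close>: the 0-based index of the block containing \<open>j\<close>.\<close>
  define idx where "idx j = card {i. i < length lam \<and> psum lam (Suc i) \<le> j}" for j
  have idx: "idx j = i" if "i < length lam" "j \<in> block lam (Suc i)" for i j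
  proof -
    have "{i'. i' < length lam \<and> psum lam (Suc i') \<le> j} = {..<i}"
    proof (rule Set.set_eqI, rule iffI)
      fix i' assume "i' \<in> {i'. i' < length lam \<and> psum lam (Suc i') \<le> j}"
      then show "i' \<in> {..<i}"
        using that(2) psum_mono[of "Suc i" "Suc i'" lam] by (force simp: block_Suc)
    next
      fix i' assume "i' \<in> {..<i}"
      then show "i' \<in> {i'. i' < length lam \<and> psum lam (Suc i') \<le> j}"
        using that psum_mono[of "Suc i'" i lam] by (auto simp: block_Suc)
    qed
    then show ?thesis by (simp add: idx_def)
  qed
  show thesis
  proof
    show "constant_on_blocks lam (c \<circ> idx)"
      unfolding constant_on_blocks_def
    proof (intro ballI)
      fix i a b assume i: "i \<in> {1..length lam}" and ab: "a \<in> block lam i" "b \<in> block lam i"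
      then obtain i' where "i = Suc i'" "i' < length lam" by (cases i) auto
      then show "(c \<circ> idx) a = (c \<circ> idx) b" using idx ab by simp
    qed
    fix i assume i: "i < length lam"
    then have "psum lam i \<in> block lam (Suc i)"
      using psum_less_Suc[OF assms] by (simp add: block_Suc)
    then show "(c \<circ> idx) (psum lam i) = c i" using idx[OF i] by simp
  qed simp
qed

section \<open>The Young subgroup and its conjugates \<open>P\<^sub>\<lambda>\<^sup>\<alpha>\<close>\<close>

definition D_entry :: "quat \<Rightarrow> nat \<Rightarrow> quat" where
  "D_entry \<alpha> j = (if j = 0 then \<alpha> else 1)"

lemma D_mat_eq_mon_mat: "D_mat n \<alpha> = mon_mat n id (D_entry \<alpha>)"
  by (simp add: D_mat_def D_entry_def[abs_def] qdiag_eq_mon_mat)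

lemma D_entry_nonzero: "\<alpha> \<noteq> 0 \<Longrightarrow> D_entry \<alpha> j \<noteq> 0"
  by (simp add: D_entry_def)

lemma inverse_D_entry: "inverse (D_entry \<alpha> j) = D_entry (inverse \<alpha>) j"
  by (simp add: D_entry_def)

lemma D_mat_Units: "\<alpha> \<noteq> 0 \<Longrightarrow> D_mat n \<alpha> \<in> Units (qmat_monoid n)"
  by (simp add: D_mat_eq_mon_mat D_entry_nonzero mon_mat_Units)

lemma inv_D_mat: "\<alpha> \<noteq> 0 \<Longrightarrow> inv\<^bsub>qmat_monoid n\<^esub> (D_mat n \<alpha>) = D_mat n (inverse \<alpha>)"
  by (simp add: D_mat_eq_mon_mat D_entry_nonzero mon_mat_Units inverse_D_entry)

lemma D_mat_inverse_mult: "\<alpha> \<noteq> 0 \<Longrightarrow> qmat_mult n (D_mat n (inverse \<alpha>)) (D_mat n \<alpha>) = qmat_one n"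
  using monoid.Units_l_inv[OF monoid_qmat_monoid D_mat_Units] by (simp add: inv_D_mat)

definition young_mats :: "nat \<Rightarrow> nat list \<Rightarrow> qmat set" where
  "young_mats n lam = set_prod_list n
     (map (\<lambda>i. perm_mat n ` {\<sigma>. \<sigma> permutes block lam i}) [1..<Suc (length lam)])"

lemma perm_mat_carrier [simp]: "perm_mat n \<sigma> \<in> carrier (qmat_monoid n)"
  by (simp add: perm_mat_eq_mon_mat)

lemma P_lam_eq_conj_young_mats:
  assumes "\<alpha> \<noteq> 0"
  shows "P_lam n lam \<alpha> = qmat_conj n (D_mat n \<alpha>) ` young_mats n lam"
proof -
  have "P_block n lam \<alpha> = (\<lambda>i. qmat_conj n (D_mat n \<alpha>) ` perm_mat n ` {\<sigma>. \<sigma> permutes block lam i})"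
    using assms
    by (intro ext) (simp add: P_block_def qmat_conj_def inv_D_mat image_image setcompr_eq_image)
  moreover have "\<forall>S\<in>set (map (\<lambda>i. perm_mat n ` {\<sigma>. \<sigma> permutes block lam i}) [1..<Suc (length lam)]).
      S \<subseteq> carrier (qmat_monoid n)"
    by auto
  ultimately show ?thesis
    unfolding P_lam_def young_mats_def
    by (simp add: image_qmat_conj_set_prod_list[OF D_mat_Units[OF assms]] comp_def)
qed

lemma young_mats_subset_perm_mats:
  assumes "sum_list lam = n"
  shows "young_mats n lam \<subseteq> perm_mat n ` {\<sigma>. \<sigma> permutes {..<n}}"
  unfolding young_mats_def
proof (rule set_prod_list_subset)
  show "qmat_one n \<in> perm_mat n ` {\<sigma>. \<sigma> permutes {..<n}}"
    by (rule image_eqI[of _ _ id]) (simp_all add: perm_mat_eq_mon_mat qmat_one_eq_mon_mat)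
next
  fix A B assume "A \<in> perm_mat n ` {\<sigma>. \<sigma> permutes {..<n}}" "B \<in> perm_mat n ` {\<sigma>. \<sigma> permutes {..<n}}"
  then show "qmat_mult n A B \<in> perm_mat n ` {\<sigma>. \<sigma> permutes {..<n}}"
    by (auto simp: perm_mat_eq_mon_mat mon_mat_mult intro: permutes_compose)
next
  show "\<forall>S\<in>set (map (\<lambda>i. perm_mat n ` {\<sigma>. \<sigma> permutes block lam i}) [1..<Suc (length lam)]).
      S \<subseteq> perm_mat n ` {\<sigma>. \<sigma> permutes {..<n}}"
  proof
    fix S
    assume "S \<in> set (map (\<lambda>i. perm_mat n ` {\<sigma>. \<sigma> permutes block lam i}) [1..<Suc (length lam)])"
    then obtain i where "i \<in> set [1..<Suc (length lam)]"
      "S = perm_mat n ` {\<sigma>. \<sigma> permutes block lam i}"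
      unfolding set_map by blast
    then show "S \<subseteq> perm_mat n ` {\<sigma>. \<sigma> permutes {..<n}}"
      using permutes_block[OF assms, of i] by auto
  qed
qed

lemma perm_mat_mem_young_mats:
  assumes "1 \<le> i" "i \<le> length lam" "\<sigma> permutes block lam i"
  shows "perm_mat n \<sigma> \<in> young_mats n lam"
  unfolding young_mats_def
proof (rule mem_set_prod_list)
  show "\<forall>S\<in>set (map (\<lambda>i. perm_mat n ` {\<sigma>. \<sigma> permutes block lam i}) [1..<Suc (length lam)]).
      qmat_one n \<in> S"
    by (auto simp: perm_mat_eq_mon_mat qmat_one_eq_mon_mat intro!: image_eqI[of _ _ id])
  show "perm_mat n ` {\<sigma>. \<sigma> permutes block lam i}
      \<in> set (map (\<lambda>i. perm_mat n ` {\<sigma>. \<sigma> permutes block lam i}) [1..<Suc (length lam)])"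
    unfolding set_map by (rule imageI) (use assms(1,2) in auto)
  show "perm_mat n \<sigma> \<in> perm_mat n ` {\<sigma>. \<sigma> permutes block lam i}"
    using assms(3) by auto
qed simp

lemma image_qmat_conj_young_mats:
  assumes "sum_list lam = n" "\<And>j. j < n \<Longrightarrow> r j \<noteq> 0" "constant_on_blocks lam r"
  shows "qmat_conj n (qdiag n r) ` young_mats n lam = young_mats n lam"
proof -
  define L where "L = map (\<lambda>i. perm_mat n ` {\<sigma>. \<sigma> permutes block lam i}) [1..<Suc (length lam)]"
  have "qmat_conj n (qdiag n r) (perm_mat n \<sigma>) = perm_mat n \<sigma>"
    if "1 \<le> i" "i \<le> length lam" "\<sigma> permutes block lam i" for i \<sigma>
  proof -
    have "\<sigma> permutes {..<n}" using permutes_block[OF assms(1) that(2,3)] .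
    then have "qmat_conj n (qdiag n r) (perm_mat n \<sigma>)
        = mon_mat n \<sigma> (\<lambda>j. r (\<sigma> j) * inverse (r j))"
      by (simp add: qdiag_eq_mon_mat perm_mat_eq_mon_mat qmat_conj_mon_mat assms(2))
    also have "\<dots> = perm_mat n \<sigma>"
      using assms(2) constant_on_blocks_permutes[OF assms(3) that]
      by (simp add: perm_mat_eq_mon_mat cong: mon_mat_cong)
    finally show ?thesis .
  qed
  then have "map ((`) (qmat_conj n (qdiag n r))) L = L"
    unfolding L_def by (auto simp: image_image intro!: image_cong)
  moreover have "qmat_conj n (qdiag n r) ` set_prod_list n L
      = set_prod_list n (map ((`) (qmat_conj n (qdiag n r))) L)"
    by (rule image_qmat_conj_set_prod_list)
       (auto simp: L_def qdiag_eq_mon_mat mon_mat_Units assms(2))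
  ultimately show ?thesis
    by (simp only: young_mats_def L_def[symmetric])
qed

lemma normalizes_young_mats_imp_constant_on_blocks:
  assumes "sum_list lam = n" "\<tau> permutes {..<n}" "\<And>j. j < n \<Longrightarrow> f j \<noteq> 0"
    and "qmat_conj n (mon_mat n \<tau> f) ` young_mats n lam \<subseteq> young_mats n lam"
  shows "constant_on_blocks lam f"
  unfolding constant_on_blocks_def
proof (intro ballI)
  fix i a b assume i: "i \<in> {1..length lam}" and ab: "a \<in> block lam i" "b \<in> block lam i"
  let ?s = "Transposition.transpose a b"
  have s: "?s permutes block lam i" using permutes_swap_id[OF ab] .
  have a: "a < n" "\<tau> a < n"
    using ab(1) i block_subset[of i lam] assms(1) permutes_in_image[OF assms(2)] by auto
  have "qmat_conj n (mon_mat n \<tau> f) (perm_mat n ?s) \<in> young_mats n lam"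
    using assms(4) perm_mat_mem_young_mats[OF _ _ s] i by auto
  then obtain \<sigma> where \<sigma>: "\<sigma> permutes {..<n}"
    "qmat_conj n (mon_mat n \<tau> f) (perm_mat n ?s) = mon_mat n \<sigma> (\<lambda>_. 1)"
    using young_mats_subset_perm_mats[OF assms(1)] by (auto simp: perm_mat_eq_mon_mat)
  have "qmat_conj n (mon_mat n \<tau> f) (mon_mat n ?s (\<lambda>_. 1)) = mon_mat n (\<tau> \<circ> ?s \<circ> inv_into UNIV \<tau>)
      (\<lambda>j. f (?s (inv_into UNIV \<tau> j)) * 1 * inverse (f (inv_into UNIV \<tau> j)))"
    using i by (intro qmat_conj_mon_mat assms(2,3) permutes_block[OF assms(1) _ s]) auto
  then have eq: "mon_mat n (\<tau> \<circ> ?s \<circ> inv_into UNIV \<tau>)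
      (\<lambda>j. f (?s (inv_into UNIV \<tau> j)) * 1 * inverse (f (inv_into UNIV \<tau> j))) = mon_mat n \<sigma> (\<lambda>_. 1)"
    by (metis \<sigma>(2) perm_mat_eq_mon_mat)
  \<comment> \<open>Column \<open>\<tau> a\<close> of \<open>h (a b) h\<^sup>-\<^sup>1\<close> carries the entry \<open>f b / f a\<close>, which must be \<open>1\<close>.\<close>
  have "\<sigma> (\<tau> a) < n" using permutes_in_image[OF \<sigma>(1)] a(2) by simp
  then have "f (?s a) * inverse (f a) = 1"
    using mon_mat_eq_imp_entry_eq[OF eq a(2)] permutes_inverses(2)[OF assms(2)] by simp
  then show "f a = f b"
    using assms(3)[OF a(1)] by (simp add: field_simps)
qed

lemma image_qmat_conj_P_lam_iff:
  assumes "g \<in> Units (qmat_monoid n)" "\<alpha> \<noteq> 0" "\<beta> \<noteq> 0"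
  shows "qmat_conj n g ` P_lam n lam \<alpha> = P_lam n lam \<beta> \<longleftrightarrow>
    qmat_conj n (qmat_mult n (D_mat n (inverse \<beta>)) (qmat_mult n g (D_mat n \<alpha>))) ` young_mats n lam
      = young_mats n lam"
    (is "?conj \<longleftrightarrow> qmat_conj n ?h ` ?Y = ?Y")
proof -
  have carrier: "?Y \<subseteq> carrier (qmat_monoid n)" "\<And>g S. qmat_conj n g ` S \<subseteq> carrier (qmat_monoid n)"
    by (auto simp: young_mats_def set_prod_list_carrier)
  have units: "D_mat n \<alpha> \<in> Units (qmat_monoid n)" "D_mat n (inverse \<beta>) \<in> Units (qmat_monoid n)"
    using assms(2,3) by (simp_all add: D_mat_Units)
  have h: "qmat_conj n ?h ` ?Y = qmat_conj n (D_mat n (inverse \<beta>)) ` qmat_conj n g ` P_lam n lam \<alpha>"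
    using assms carrier units
    by (simp add: P_lam_eq_conj_young_mats image_qmat_conj_conj qmat_mult_Units)
  have \<beta>: "qmat_conj n (D_mat n \<beta>) ` qmat_conj n (D_mat n (inverse \<beta>)) ` S = S"
    if "S \<subseteq> carrier (qmat_monoid n)" for S
    using image_qmat_conj_inv[OF units(2) that] assms(3) by (simp add: inv_D_mat)
  show ?thesis
  proof
    assume ?conj
    then show "qmat_conj n ?h ` ?Y = ?Y"
      using h image_qmat_conj_inv[OF D_mat_Units[OF assms(3)] carrier(1)]
      by (simp add: P_lam_eq_conj_young_mats assms(3) inv_D_mat)
  next
    assume "qmat_conj n ?h ` ?Y = ?Y"
    then show ?conj
      using \<beta>[of "qmat_conj n g ` P_lam n lam \<alpha>"] h carrier
      by (simp add: P_lam_eq_conj_young_mats assms(3))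
  qed
qed

section \<open>Products of powers in a finite cyclic group\<close>

lemma (in comm_monoid) finprod_pow:
  assumes "f \<in> A \<rightarrow> carrier G"
  shows "(\<Otimes>i\<in>A. f i) [^] (k :: nat) = (\<Otimes>i\<in>A. f i [^] k)"
proof (cases "finite A")
  case True
  then show ?thesis using assms
    by (induction A rule: finite_induct) (auto simp: pow_mult_distrib m_comm Pi_def)
qed simp

lemma (in comm_group) finprod_int_pow:
  assumes "a \<in> carrier G"
  shows "(\<Otimes>i\<in>{..<k :: nat}. a [^] (e i :: int)) = a [^] (\<Sum>i<k. e i)"
  by (induction k) (simp_all add: assms lessThan_Suc int_pow_mult m_comm)

lemma Gcd_list_bezout:
  "\<exists>u. int (Gcd (set ns)) = (\<Sum>i<length ns. u i * int (ns ! i))"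
proof (induction ns)
  case (Cons m ns)
  obtain u where u: "int (Gcd (set ns)) = (\<Sum>i<length ns. u i * int (ns ! i))"
    using Cons.IH by blast
  obtain s t where st: "int (gcd m (Gcd (set ns))) = s * int m + t * int (Gcd (set ns))"
    using bezout_int[of "int m" "int (Gcd (set ns))"] by (metis gcd_int_int_eq)
  define u' where "u' i = (if i = 0 then s else t * u (i - 1))" for i
  have "int (Gcd (set (m # ns))) = s * int m + (\<Sum>i<length ns. t * u i * int (ns ! i))"
    by (simp add: st u sum_distrib_left mult.assoc)
  also have "\<dots> = (\<Sum>i<length (m # ns). u' i * int ((m # ns) ! i))"
    unfolding length_Cons sum.lessThan_Suc_shift by (simp add: u'_def)
  finally show ?case by blast
qed simp

lemma (in comm_group) finprod_pows_pow_order_div_Gcd: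
  assumes "finite (carrier G)" "c \<in> {..<length lam} \<rightarrow> carrier G"
  shows "(\<Otimes>i\<in>{..<length lam}. c i [^] (lam ! i)) [^] (order G div Gcd (set (order G # lam))) = \<one>"
    (is "_ [^] (?m div ?d) = \<one>")
proof -
  have "(c i [^] (lam ! i)) [^] (?m div ?d) = \<one>" if i: "i < length lam" for i
  proof -
    have ci: "c i \<in> carrier G" using assms(2) i by auto
    have "?d dvd ?m" by (intro Gcd_dvd) simp
    have "?d dvd lam ! i" using i by (intro Gcd_dvd) simp
    then obtain q where "lam ! i = ?d * q" by (elim dvdE)
    then have "lam ! i * (?m div ?d) = ?d * (?m div ?d) * q" by (simp add: ac_simps)
    also have "\<dots> = ?m * q" using \<open>?d dvd ?m\<close> by simp
    finally have "lam ! i * (?m div ?d) = ?m * q" .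
    then have "(c i [^] (lam ! i)) [^] (?m div ?d) = (c i [^] ?m) [^] q"
      using ci by (simp add: nat_pow_pow)
    also have "\<dots> = \<one>" using ci assms(1) by (simp add: pow_order_eq_1)
    finally show ?thesis .
  qed
  then have "(\<Otimes>i\<in>{..<length lam}. (c i [^] (lam ! i)) [^] (?m div ?d)) = \<one>"
    by (intro finprod_one_eqI) simp
  then show ?thesis
    using assms(2) by (subst finprod_pow) auto
qed

lemma (in group) generator_pow_if_pow_order_div_eq_one:
  assumes "a \<in> carrier G" "subgroup_generated G {a} = G" "finite (carrier G)"
    and "x \<in> carrier G" "d dvd order G" "x [^] (order G div d) = \<one>"
  obtains t :: int where "x = a [^] (int d * t)"
proof -
  have "carrier G = generate G {a}"
    using carrier_subgroup_generated[of G "{a}"] assms(1,2) by simp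
  then obtain e :: int where e: "x = a [^] e"
    using generate_pow[OF assms(1)] assms(4) by auto
  have "a [^] (e * int (order G div d)) = \<one>"
    using assms(1,6) by (simp add: e int_pow_pow[symmetric] int_pow_int)
  moreover have "ord a = order G"
    using cyclic_order_is_ord[OF assms(1)] assms(2) by simp
  ultimately have "int d * int (order G div d) dvd e * int (order G div d)"
    using int_pow_eq_id[OF assms(1)] assms(5) by (simp flip: of_nat_mult)
  moreover have "order G div d \<noteq> 0"
    using dvd_mult_div_cancel[OF assms(5)] assms(3) order_gt_0_iff_finite
    by (metis mult_0_right neq0_conv)
  ultimately have "int d dvd e" by simp
  then show ?thesis using that e by (auto elim!: dvdE)
qed

lemma (in group) cyclic_group_finprod_pows_iff:
  assumes "cyclic_group G" "finite (carrier G)" "x \<in> carrier G"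
  shows "(\<exists>c. c \<in> {..<length lam} \<rightarrow> carrier G \<and> x = (\<Otimes>i\<in>{..<length lam}. c i [^] (lam ! i)))
    \<longleftrightarrow> x [^] (order G div Gcd (set (order G # lam))) = \<one>"
    (is "?lhs \<longleftrightarrow> x [^] (?m div ?d) = \<one>")
proof -
  interpret comm_group G using cyclic_imp_abelian_group[OF assms(1)] .
  show ?thesis
  proof
    assume ?lhs
    then show "x [^] (?m div ?d) = \<one>"
      using finprod_pows_pow_order_div_Gcd[OF assms(2)] by blast
  next
    assume "x [^] (?m div ?d) = \<one>"
    moreover obtain a where a: "a \<in> carrier G" "subgroup_generated G {a} = G"
      using assms(1) unfolding cyclic_group_def by blast
    ultimately obtain t where t: "x = a [^] (int ?d * t)"
      using generator_pow_if_pow_order_div_eq_one[OF a assms(2,3)] by (auto intro: Gcd_dvd)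
    obtain u where u: "int ?d = (\<Sum>i<length (?m # lam). u i * int ((?m # lam) ! i))"
      using Gcd_list_bezout by blast
    \<comment> \<open>Bezout: \<open>d = u\<^sub>0 m + \<Sum>\<^sub>i u\<^sub>i \<lambda>\<^sub>i\<close>, and \<open>a\<^sup>m = 1\<close> kills the first summand.\<close>
    define c where "c i = a [^] (t * u (Suc i))" for i
    have "(\<Otimes>i\<in>{..<length lam}. c i [^] (lam ! i))
        = (\<Otimes>i\<in>{..<length lam}. a [^] (t * u (Suc i) * int (lam ! i)))"
      using a(1) by (intro finprod_cong') (auto simp: c_def int_pow_pow int_pow_int[symmetric])
    also have "\<dots> = a [^] (int ?d * t + int ?m * (- t * u 0))"
      using a(1) u unfolding length_Cons sum.lessThan_Suc_shift
      by (simp add: finprod_int_pow sum_distrib_left algebra_simps)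
    also have "\<dots> = a [^] (int ?d * t) \<otimes> a [^] (int ?m * (- t * u 0))"
      by (rule int_pow_mult[OF a(1)])
    also have "\<dots> = x \<otimes> (a [^] ?m) [^] (- t * u 0)"
      using int_pow_pow[OF a(1), of "int ?m"] by (simp add: t int_pow_int)
    also have "\<dots> = x"
      using a(1) assms(2,3) by (simp add: pow_order_eq_1)
    finally show ?lhs
      using a(1) by (intro exI[of _ c]) (simp add: c_def)
  qed
qed

section \<open>The quotient \<open>K/H\<close>\<close>

lemma foldr_times_eq: "foldr (*) xs z = foldr (*) xs 1 * (z :: 'a :: monoid_mult)"
  by (induction xs) (simp_all add: mult.assoc)

locale quat_cyclic_quotient =
  fixes K H :: "quat set" and KG :: "quat monoid" and Q :: "quat set monoid"
  assumes KG_def: "KG = quat_units\<lparr>carrier := K\<rparr>"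
    and Q_def: "Q = KG Mod H"
    and subgroup_K: "subgroup K quat_units"
    and finite_K: "finite K"
    and normal_H: "H \<lhd> KG"
    and cyclic_Q: "cyclic_group Q"
begin

definition proj :: "quat \<Rightarrow> quat set" where
  "proj x = H #>\<^bsub>KG\<^esub> x"

lemma KG_simps [simp]: "carrier KG = K" "monoid.mult KG = (*)" "one KG = 1"
  by (simp_all add: KG_def quat_units_def)

lemma group_KG: "group KG"
  unfolding KG_def by (rule subgroup.subgroup_is_group[OF subgroup_K group_quat_units])

lemma K_nonzero: "x \<in> K \<Longrightarrow> x \<noteq> 0"
  using subgroup.subset[OF subgroup_K] by (auto simp: quat_units_def)

lemma K_mult: "x \<in> K \<Longrightarrow> y \<in> K \<Longrightarrow> x * y \<in> K"
  using subgroup.m_closed[OF subgroup_K] by (simp add: quat_units_def)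

lemma K_one: "1 \<in> K"
  using subgroup.one_closed[OF subgroup_K] by (simp add: quat_units_def)

lemma K_inverse: "x \<in> K \<Longrightarrow> inverse x \<in> K"
  using subgroup.m_inv_closed[OF subgroup_K] K_nonzero by fastforce

lemma inv_KG: "x \<in> K \<Longrightarrow> inv\<^bsub>KG\<^esub> x = inverse x"
  using group.m_inv_consistent[OF group_quat_units subgroup_K] K_nonzero
  by (simp add: KG_def)

lemma D_entry_K: "\<alpha> \<in> K \<Longrightarrow> D_entry \<alpha> j \<in> K"
  by (simp add: D_entry_def K_one)

lemma comm_group_Q: "comm_group Q"
  unfolding Q_def
  by (rule group.cyclic_imp_abelian_group[OF normal.factorgroup_is_group[OF normal_H]])
     (use cyclic_Q Q_def in simp)

sublocale Q: comm_group Q by (rule comm_group_Q)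

lemma group_hom_proj: "group_hom KG Q proj"
  using normal.r_coset_hom_Mod[OF normal_H] group_KG Q.is_group
  by (simp add: group_hom_def group_hom_axioms_def Q_def proj_def[abs_def])

lemma proj_closed: "x \<in> K \<Longrightarrow> proj x \<in> carrier Q"
  using group_hom.hom_closed[OF group_hom_proj] by simp

lemma proj_mult: "x \<in> K \<Longrightarrow> y \<in> K \<Longrightarrow> proj (x * y) = proj x \<otimes>\<^bsub>Q\<^esub> proj y"
  using group_hom.hom_mult[OF group_hom_proj] by simp

lemma proj_one: "proj 1 = \<one>\<^bsub>Q\<^esub>"
  using group_hom.hom_one[OF group_hom_proj] by simp

lemma proj_inverse: "x \<in> K \<Longrightarrow> proj (inverse x) = inv\<^bsub>Q\<^esub> proj x"
  using group_hom.hom_inv[OF group_hom_proj] inv_KG by simp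

lemma proj_eq_one_iff: "x \<in> K \<Longrightarrow> proj x = \<one>\<^bsub>Q\<^esub> \<longleftrightarrow> x \<in> H"
  using group.coset_join1[OF group_KG] group.coset_join2[OF group_KG] normal.axioms(1)[OF normal_H]
  by (auto simp: proj_def Q_def)

lemma carrier_Q: "carrier Q = proj ` K"
  by (simp add: Q_def carrier_FactGroup proj_def[abs_def])

lemma finite_carrier_Q: "finite (carrier Q)"
  by (simp add: carrier_Q finite_K)

lemma order_Q: "order Q = card (rcosets\<^bsub>KG\<^esub> H)"
  by (simp add: order_def Q_def FactGroup_def)

definition proj_prod :: "nat \<Rightarrow> (nat \<Rightarrow> quat) \<Rightarrow> quat set" where
  "proj_prod n e = (\<Otimes>\<^bsub>Q\<^esub>j\<in>{..<n}. proj (e j))"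

lemma proj_prod_closed: "\<forall>j<n. e j \<in> K \<Longrightarrow> proj_prod n e \<in> carrier Q"
  by (simp add: proj_prod_def proj_closed Pi_def)

lemma proj_prod_mult:
  assumes "\<forall>j<n. e j \<in> K" "\<forall>j<n. f j \<in> K"
  shows "proj_prod n (\<lambda>j. e j * f j) = proj_prod n e \<otimes>\<^bsub>Q\<^esub> proj_prod n f"
proof -
  have "proj_prod n (\<lambda>j. e j * f j) = (\<Otimes>\<^bsub>Q\<^esub>j\<in>{..<n}. proj (e j) \<otimes>\<^bsub>Q\<^esub> proj (f j))"
    unfolding proj_prod_def using assms
    by (intro Q.finprod_cong') (auto simp: proj_mult proj_closed)
  also have "\<dots> = proj_prod n e \<otimes>\<^bsub>Q\<^esub> proj_prod n f"
    unfolding proj_prod_def using assms by (intro Q.finprod_multf) (auto simp: proj_closed)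
  finally show ?thesis .
qed

lemma proj_prod_mult3:
  assumes "\<forall>j<n. a j \<in> K" "\<forall>j<n. b j \<in> K" "\<forall>j<n. c j \<in> K"
  shows "proj_prod n (\<lambda>j. a j * b j * c j) = proj_prod n a \<otimes>\<^bsub>Q\<^esub> proj_prod n b \<otimes>\<^bsub>Q\<^esub> proj_prod n c"
  using assms by (simp add: proj_prod_mult K_mult)

lemma proj_prod_permute:
  assumes "\<sigma> permutes {..<n}" "\<forall>j<n. e j \<in> K"
  shows "proj_prod n (\<lambda>j. e (\<sigma> j)) = proj_prod n e"
  unfolding proj_prod_def
  using Q.finprod_reindex[where f="\<lambda>j. proj (e j)" and A="{..<n}" and h=\<sigma>] assms proj_closed
    permutes_image[OF assms(1)] permutes_inj_on[OF assms(1)]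
  by (simp add: Pi_def)

lemma proj_prod_inverse:
  assumes "\<forall>j<n. e j \<in> K"
  shows "proj_prod n (\<lambda>j. inverse (e j)) = inv\<^bsub>Q\<^esub> proj_prod n e"
proof -
  have "proj_prod n (\<lambda>j. inverse (e j)) \<otimes>\<^bsub>Q\<^esub> proj_prod n e = proj_prod n (\<lambda>j. inverse (e j) * e j)"
    using assms by (simp add: proj_prod_mult K_inverse)
  also have "\<dots> = \<one>\<^bsub>Q\<^esub>"
    unfolding proj_prod_def using assms by (intro Q.finprod_one_eqI) (simp add: K_nonzero proj_one)
  finally show ?thesis
    using assms by (intro Q.inv_equality[symmetric]) (auto simp: proj_prod_closed K_inverse)
qed

lemma proj_prod_D_entry:
  assumes "0 < n" "\<alpha> \<in> K"
  shows "proj_prod n (D_entry \<alpha>) = proj \<alpha>"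
proof -
  have split: "{..<n} = insert 0 {1..<n}" using assms(1) by auto
  have "(\<Otimes>\<^bsub>Q\<^esub>j\<in>{1..<n}. proj (D_entry \<alpha> j)) = \<one>\<^bsub>Q\<^esub>"
    by (intro Q.finprod_one_eqI) (simp add: D_entry_def proj_one)
  then show ?thesis
    unfolding proj_prod_def split using assms(2)
    by (subst Q.finprod_insert) (auto simp: proj_closed D_entry_K D_entry_def K_one)
qed

lemma proj_foldr:
  assumes "\<forall>i<n. k i \<in> K"
  shows "foldr (*) (map k [0..<n]) 1 \<in> K \<and> proj (foldr (*) (map k [0..<n]) 1) = proj_prod n k"
  using assms
proof (induction n)
  case (Suc n)
  have "foldr (*) (map k [0..<Suc n]) 1 = foldr (*) (map k [0..<n]) 1 * k n"
    by (simp add: foldr_times_eq[of _ "k n"])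
  then show ?case
    using Suc by (simp add: K_mult proj_mult proj_prod_def lessThan_Suc Q.m_comm proj_closed Pi_def)
qed (simp add: K_one proj_one proj_prod_def)

text \<open>The monomial matrices \<open>M(\<tau>) diag(e)\<close> with entries in \<open>K\<close> and \<open>e\<^sub>0 \<cdots> e\<^sub>n\<^sub>-\<^sub>1 \<in> H\<close>;
  since \<open>K/H\<close> is abelian, the order of the factors does not matter.\<close>
definition mon_KH :: "nat \<Rightarrow> qmat set" where
  "mon_KH n = {mon_mat n \<tau> e | \<tau> e. \<tau> permutes {..<n} \<and> (\<forall>j<n. e j \<in> K) \<and> proj_prod n e = \<one>\<^bsub>Q\<^esub>}"

lemma qmat_one_mem_mon_KH: "qmat_one n \<in> mon_KH n"
  unfolding mon_KH_def qmat_one_eq_mon_mat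
  by (intro CollectI exI[of _ id] exI[of _ "\<lambda>_. 1"]) (simp add: K_one proj_prod_def proj_one)

lemma qmat_mult_mem_mon_KH:
  assumes "A \<in> mon_KH n" "B \<in> mon_KH n"
  shows "qmat_mult n A B \<in> mon_KH n"
proof -
  obtain \<tau> e where A: "A = mon_mat n \<tau> e" "\<tau> permutes {..<n}" "\<forall>j<n. e j \<in> K"
      "proj_prod n e = \<one>\<^bsub>Q\<^esub>"
    using assms(1) unfolding mon_KH_def by auto
  obtain \<sigma> f where B: "B = mon_mat n \<sigma> f" "\<sigma> permutes {..<n}" "\<forall>j<n. f j \<in> K"
      "proj_prod n f = \<one>\<^bsub>Q\<^esub>"
    using assms(2) unfolding mon_KH_def by auto
  have e\<sigma>: "\<forall>j<n. e (\<sigma> j) \<in> K" using A(3) permutes_in_image[OF B(2)] by simp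
  have "proj_prod n (\<lambda>j. e (\<sigma> j) * f j) = \<one>\<^bsub>Q\<^esub>"
    using A B e\<sigma> by (simp add: proj_prod_mult proj_prod_permute)
  then show ?thesis
    unfolding mon_KH_def A(1) B(1) mon_mat_mult[OF B(2)]
    using permutes_compose[OF B(2) A(2)] e\<sigma> B(3) K_mult by blast
qed

lemma inv_mem_mon_KH:
  assumes "A \<in> mon_KH n"
  shows "inv\<^bsub>qmat_monoid n\<^esub> A \<in> mon_KH n"
proof -
  obtain \<tau> e where A: "A = mon_mat n \<tau> e" "\<tau> permutes {..<n}" "\<forall>j<n. e j \<in> K"
      "proj_prod n e = \<one>\<^bsub>Q\<^esub>"
    using assms unfolding mon_KH_def by auto
  let ?\<tau>' = "inv_into UNIV \<tau>"
  have \<tau>': "?\<tau>' permutes {..<n}" using permutes_inv[OF A(2)] .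
  have e\<tau>': "\<forall>j<n. e (?\<tau>' j) \<in> K" using A(3) permutes_in_image[OF \<tau>'] by simp
  have "inv\<^bsub>qmat_monoid n\<^esub> A = mon_mat n ?\<tau>' (\<lambda>j. inverse (e (?\<tau>' j)))"
    unfolding A(1) using A(3) K_nonzero by (intro mon_mat_Units(2)[OF A(2)]) auto
  moreover have "proj_prod n (\<lambda>j. inverse (e (?\<tau>' j))) = \<one>\<^bsub>Q\<^esub>"
    using A(2-4) e\<tau>' \<tau>' by (simp add: proj_prod_inverse proj_prod_permute)
  ultimately show ?thesis
    unfolding mon_KH_def using \<tau>' e\<tau>' K_inverse
    by (intro CollectI exI[of _ ?\<tau>'] exI[of _ "\<lambda>j. inverse (e (?\<tau>' j))"]) simp
qed

lemma A_n_subset_mon_KH: "A_n n K H \<subseteq> mon_KH n"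
proof
  fix A assume "A \<in> A_n n K H"
  then obtain k where k: "A = mon_mat n id k" "\<forall>i<n. k i \<in> K" "foldr (*) (map k [0..<n]) 1 \<in> H"
    unfolding A_n_def qdiag_eq_mon_mat by auto
  then have "proj_prod n k = \<one>\<^bsub>Q\<^esub>" using proj_foldr[OF k(2)] proj_eq_one_iff by auto
  then show "A \<in> mon_KH n"
    unfolding k(1) mon_KH_def using k(2) by (intro CollectI exI[of _ id] exI[of _ k]) simp
qed

lemma perm_mat_mem_mon_KH: "\<sigma> permutes {..<n} \<Longrightarrow> perm_mat n \<sigma> \<in> mon_KH n"
  unfolding mon_KH_def perm_mat_eq_mon_mat
  by (intro CollectI exI[of _ \<sigma>] exI[of _ "\<lambda>_. 1"]) (simp add: K_one proj_prod_def proj_one)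

lemma G_n_subset_mon_KH: "G_n n K H \<subseteq> mon_KH n"
proof
  fix A assume "A \<in> G_n n K H"
  then show "A \<in> mon_KH n"
    unfolding G_n_def
  proof (induction rule: generate.induct)
    case (incl h)
    then show ?case
      using A_n_subset_mon_KH perm_mat_mem_mon_KH by (auto simp: atLeast0LessThan)
  next
    case (inv h)
    then have "h \<in> mon_KH n"
      using A_n_subset_mon_KH perm_mat_mem_mon_KH by (auto simp: atLeast0LessThan)
    then show ?case by (rule inv_mem_mon_KH)
  qed (simp_all add: qmat_one_mem_mon_KH qmat_mult_mem_mon_KH)
qed

lemma conj_in_P_lam_imp:
  assumes "sum_list lam = n" "0 < n" "\<alpha> \<in> K" "\<beta> \<in> K"
    and "conj_in n (G_n n K H) (P_lam n lam \<alpha>) (P_lam n lam \<beta>)"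
  shows "\<exists>f. (\<forall>j<n. f j \<in> K) \<and> constant_on_blocks lam f \<and> proj_prod n f = proj (\<alpha> * inverse \<beta>)"
proof -
  obtain g where g: "g \<in> G_n n K H" "qmat_conj n g ` P_lam n lam \<alpha> = P_lam n lam \<beta>"
    using assms(5) by (auto simp: conj_in_iff)
  then obtain \<tau> e where ge: "g = mon_mat n \<tau> e" "\<tau> permutes {..<n}" "\<forall>j<n. e j \<in> K"
    "proj_prod n e = \<one>\<^bsub>Q\<^esub>"
    using G_n_subset_mon_KH unfolding mon_KH_def by blast
  define f where "f j = D_entry (inverse \<beta>) (\<tau> j) * e j * D_entry \<alpha> j" for j
  have d\<tau>: "\<forall>j<n. D_entry (inverse \<beta>) (\<tau> j) \<in> K"
    using assms(4) by (simp add: D_entry_K K_inverse)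
  have fK: "\<forall>j<n. f j \<in> K"
    using ge(3) d\<tau> assms(3) by (simp add: f_def K_mult D_entry_K)
  have "qmat_conj n (qmat_mult n (D_mat n (inverse \<beta>)) (qmat_mult n g (D_mat n \<alpha>))) `
      young_mats n lam = young_mats n lam"
    using g(2) ge K_nonzero assms(3,4)
    by (subst image_qmat_conj_P_lam_iff[symmetric]) (auto simp: mon_mat_Units)
  moreover have "qmat_mult n (D_mat n (inverse \<beta>)) (qmat_mult n g (D_mat n \<alpha>)) = mon_mat n \<tau> f"
    unfolding ge(1) D_mat_eq_mon_mat f_def using ge(2) by (simp add: mon_mat_mult mult.assoc)
  ultimately have "constant_on_blocks lam f"
    using fK K_nonzero
    by (intro normalizes_young_mats_imp_constant_on_blocks[OF assms(1) ge(2)]) auto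
  moreover have "proj_prod n f = proj (\<alpha> * inverse \<beta>)"
    using ge assms(2-4) d\<tau> unfolding f_def[abs_def]
    by (simp add: proj_prod_mult3 proj_prod_permute proj_prod_D_entry D_entry_K K_inverse
        proj_mult proj_closed Q.m_comm)
  ultimately show ?thesis using fK by blast
qed

lemma constant_on_blocks_imp_conj_in_P_lam:
  assumes "sum_list lam = n" "0 < n" "\<alpha> \<in> K" "\<beta> \<in> K"
    and "\<forall>j<n. f j \<in> K" "constant_on_blocks lam f" "proj_prod n f = proj (\<alpha> * inverse \<beta>)"
  shows "conj_in n (G_n n K H) (P_lam n lam \<alpha>) (P_lam n lam \<beta>)"
proof -
  define \<gamma> where "\<gamma> j = D_entry \<beta> j * f j * D_entry (inverse \<alpha>) j" for j
  let ?g = "qmat_mult n (D_mat n \<beta>) (qmat_mult n (qdiag n f) (D_mat n (inverse \<alpha>)))"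
  have \<alpha>0: "\<alpha> \<noteq> 0" and \<beta>0: "\<beta> \<noteq> 0" using assms(3,4) K_nonzero by auto
  have \<gamma>K: "\<forall>j<n. \<gamma> j \<in> K"
    using assms(3-5) by (simp add: \<gamma>_def K_mult K_inverse D_entry_K)
  have "proj_prod n \<gamma> = proj \<beta> \<otimes>\<^bsub>Q\<^esub> (proj \<alpha> \<otimes>\<^bsub>Q\<^esub> inv\<^bsub>Q\<^esub> proj \<beta>) \<otimes>\<^bsub>Q\<^esub> inv\<^bsub>Q\<^esub> proj \<alpha>"
    using assms(2-5,7) unfolding \<gamma>_def[abs_def]
    by (simp add: proj_prod_mult3 proj_prod_D_entry D_entry_K K_inverse proj_mult proj_inverse)
  also have "\<dots> = \<one>\<^bsub>Q\<^esub>"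
    using assms(3,4) Q.m_comm[OF proj_closed[OF assms(3)] Q.inv_closed[OF proj_closed[OF assms(4)]]]
    by (simp add: proj_closed Q.m_assoc)
  finally have "qdiag n \<gamma> \<in> A_n n K H"
    using proj_foldr[OF \<gamma>K] proj_eq_one_iff \<gamma>K unfolding A_n_def by auto
  moreover have "?g = qdiag n \<gamma>"
    by (simp add: D_mat_eq_mon_mat qdiag_eq_mon_mat mon_mat_mult \<gamma>_def[abs_def] mult.assoc)
  ultimately have "?g \<in> G_n n K H"
    unfolding G_n_def by (auto intro: generate.incl)
  moreover have "qmat_conj n ?g ` P_lam n lam \<alpha> = P_lam n lam \<beta>"
  proof (subst image_qmat_conj_P_lam_iff)
    have "qmat_mult n (D_mat n (inverse \<beta>)) (qmat_mult n ?g (D_mat n \<alpha>))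
        = qmat_mult n (qmat_mult n (D_mat n (inverse \<beta>)) (D_mat n \<beta>))
            (qmat_mult n (qdiag n f) (qmat_mult n (D_mat n (inverse \<alpha>)) (D_mat n \<alpha>)))"
      by (simp add: qmat_mult_assoc)
    also have "\<dots> = qdiag n f"
      using \<alpha>0 \<beta>0 by (simp add: D_mat_inverse_mult qmat_one_mult qmat_mult_one qdiag_eq_mon_mat)
    finally show "qmat_conj n (qmat_mult n (D_mat n (inverse \<beta>)) (qmat_mult n ?g (D_mat n \<alpha>))) `
        young_mats n lam = young_mats n lam"
      using image_qmat_conj_young_mats[OF assms(1) _ assms(6)] assms(5) K_nonzero by simp
  qed (use \<alpha>0 \<beta>0 assms(5) K_nonzero in
    \<open>auto simp: D_mat_Units qmat_mult_Units qdiag_eq_mon_mat mon_mat_Units\<close>)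
  ultimately show ?thesis unfolding conj_in_iff by blast
qed

lemma ex_lift_to_K:
  assumes "c \<in> A \<rightarrow> carrier Q"
  obtains k where "\<And>i. k i \<in> K" "\<And>i. i \<in> A \<Longrightarrow> proj (k i) = c i"
proof
  define k where "k i = (if i \<in> A then SOME y. y \<in> K \<and> proj y = c i else 1)" for i
  have "\<exists>y. y \<in> K \<and> proj y = c i" if "i \<in> A" for i
  proof -
    have "c i \<in> proj ` K" using assms that carrier_Q by auto
    then show ?thesis by blast
  qed
  from someI_ex[OF this] show "k i \<in> K" "i \<in> A \<Longrightarrow> proj (k i) = c i" for i
    unfolding k_def by (simp_all add: K_one)
qed

lemma proj_prod_constant_on_blocks:
  assumes "sum_list lam = n" "0 \<notin> set lam" "\<forall>j<n. f j \<in> K" "constant_on_blocks lam f"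
  shows "proj_prod n f = (\<Otimes>\<^bsub>Q\<^esub>i\<in>{..<length lam}. proj (f (psum lam i)) [^]\<^bsub>Q\<^esub> (lam ! i))"
  unfolding proj_prod_def using assms(3) proj_closed
  by (intro Q.finprod_constant_on_blocks[OF assms(1,2)] constant_on_blocks_comp[OF assms(4)]) auto

lemma ex_constant_on_blocks_iff:
  assumes "sum_list lam = n" "0 \<notin> set lam"
  shows "(\<exists>f. (\<forall>j<n. f j \<in> K) \<and> constant_on_blocks lam f \<and> proj_prod n f = x) \<longleftrightarrow>
    (\<exists>c. c \<in> {..<length lam} \<rightarrow> carrier Q \<and> x = (\<Otimes>\<^bsub>Q\<^esub>i\<in>{..<length lam}. c i [^]\<^bsub>Q\<^esub> (lam ! i)))"
    (is "?lhs \<longleftrightarrow> ?rhs")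
proof
  assume ?lhs
  then obtain f where f: "\<forall>j<n. f j \<in> K" "constant_on_blocks lam f" "proj_prod n f = x" by blast
  have "(\<lambda>i. proj (f (psum lam i))) \<in> {..<length lam} \<rightarrow> carrier Q"
    using f(1) psum_less_sum_list[OF assms(2)] assms(1) proj_closed by auto
  then show ?rhs
    using f proj_prod_constant_on_blocks[OF assms]
    by (intro exI[of _ "\<lambda>i. proj (f (psum lam i))"]) simp
next
  assume ?rhs
  then obtain c where c: "c \<in> {..<length lam} \<rightarrow> carrier Q"
    "x = (\<Otimes>\<^bsub>Q\<^esub>i\<in>{..<length lam}. c i [^]\<^bsub>Q\<^esub> (lam ! i))" by blast
  obtain k where k: "\<And>i. k i \<in> K" "\<And>i. i < length lam \<Longrightarrow> proj (k i) = c i"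
    using ex_lift_to_K[OF c(1)] by auto
  obtain f where f: "constant_on_blocks lam f" "\<And>i. i < length lam \<Longrightarrow> f (psum lam i) = k i"
    "\<And>j. f j \<in> range k"
    using ex_constant_on_blocks[OF assms(2)] by blast
  have fK: "\<forall>j<n. f j \<in> K" using f(3) k(1) by (metis rangeE)
  have "proj_prod n f = x"
    unfolding proj_prod_constant_on_blocks[OF assms fK f(1)] c(2)
    by (intro Q.finprod_cong') (auto simp: f(2) k(2) c(1)[THEN funcset_mem])
  then show ?lhs using fK f(1) by blast
qed

end

theorem proposition4p8:
  fixes n :: nat and K H :: "quat set" and lam :: "nat list" and \<alpha> \<beta> :: quat
  defines "KG \<equiv> quat_units\<lparr>carrier := K\<rparr>"
  assumes "n \<ge> 3"
    and "subgroup K quat_units" and "finite K"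
    and "H \<lhd> KG"
    and "derived KG K \<subseteq> H"
    and "H \<noteq> {1}"
    and "cyclic_group (KG Mod H)"
    and "is_partition lam n"
    and "\<alpha> \<in> K" and "\<beta> \<in> K"
  shows "conj_in n (G_n n K H) (P_lam n lam \<alpha>) (P_lam n lam \<beta>) \<longleftrightarrow>
         group.ord (KG Mod H) (H #>\<^bsub>KG\<^esub> (\<alpha> \<otimes>\<^bsub>KG\<^esub> inv\<^bsub>KG\<^esub> \<beta>))
           dvd card (rcosets\<^bsub>KG\<^esub> H) div Gcd (set (card (rcosets\<^bsub>KG\<^esub> H) # lam))"
proof -
  interpret quat_cyclic_quotient K H KG "KG Mod H"
    by (rule quat_cyclic_quotient.intro) (use assms(3-5,8) in \<open>simp_all add: KG_def\<close>)
  have lam: "sum_list lam = n" "0 \<notin> set lam"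
    using assms(9) by (auto simp: is_partition_def)
  let ?x = "proj (\<alpha> * inverse \<beta>)"
  have x: "H #>\<^bsub>KG\<^esub> (\<alpha> \<otimes>\<^bsub>KG\<^esub> inv\<^bsub>KG\<^esub> \<beta>) = ?x" "?x \<in> carrier (KG Mod H)"
    using assms(10,11) by (simp add: proj_def inv_KG, simp add: K_mult K_inverse proj_closed)
  have "conj_in n (G_n n K H) (P_lam n lam \<alpha>) (P_lam n lam \<beta>) \<longleftrightarrow>
      (\<exists>f. (\<forall>j<n. f j \<in> K) \<and> constant_on_blocks lam f \<and> proj_prod n f = ?x)"
    using conj_in_P_lam_imp constant_on_blocks_imp_conj_in_P_lam lam(1) assms(2,10,11) by auto
  also have "\<dots> \<longleftrightarrow> ?x [^]\<^bsub>KG Mod H\<^esub> (order (KG Mod H) div Gcd (set (order (KG Mod H) # lam)))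
      = \<one>\<^bsub>KG Mod H\<^esub>"
    using ex_constant_on_blocks_iff[OF lam] Q.cyclic_group_finprod_pows_iff[OF assms(8)]
      finite_carrier_Q x(2) by simp
  finally show ?thesis
    unfolding x(1) using Q.pow_eq_id[OF x(2)] by (simp add: order_Q)
qed

end
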